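(* Let $r\ge2$. A length function $\ell=(\ell^1,\dots,\ell^r)\in\mathbb R_{>0}^r$ on the rose $\mathcal R_r$ has $\mathfrak h_{\mathcal R_r}(\ell)=1$ if and only if $$\overline F_r(\ell):=\sum_{S\subseteq[r]}(1-2|S|)\exp(-\ell^S)=0,$$ where $\ell^S=\sum_{k\in S}\ell^k$. That is, $\mathcal M^1(\mathcal R_r)=\{\ell\in\mathbb R^r_{>0}:\overline F_r(\ell)=0\}$.
   Context: $\mathcal R_r$ is the rose with one vertex and $r$ loop edges identified with $[r]=\{1,\dots,r\}$; a length function assigns $\ell^i>0$ to edge $i$. The entropy is $\mathfrak h_{\mathcal R_r}(\ell)=\lim_{t\to\infty}\frac1t\log\#\{\gamma:\ell(\gamma)\le t\}$, where $\gamma$ ranges over based circuits: edge paths $(e_1,\dots,e_n)$ in the oriented edges (each petal with two orientations $e,\bar e$) with $e_{k+1}\ne\bar e_k$ and $e_n\ne\bar e_1$, and $\ell(\gamma)$ is the sum of the lengths of the edges traversed. $\mathcal M^1(\mathcal R_r)=\{\ell:\mathfrak h_{\mathcal R_r}(\ell)=1\}$. *)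

theory Defs
  imports Complex_Main
begin

text \<open>Oriented edges of the rose R_r: a petal index i and an orientation flag.\<close>
type_synonym oedge = "nat \<times> bool"

definition edge_inv :: "oedge \<Rightarrow> oedge" where
  "edge_inv e = (fst e, \<not> snd e)"

definition based_circuit :: "nat \<Rightarrow> oedge list \<Rightarrow> bool" where
  "based_circuit r \<gamma> \<longleftrightarrow>
     \<gamma> \<noteq> [] \<and> (\<forall>e\<in>set \<gamma>. fst e \<in> {1..r}) \<and>
     (\<forall>k. Suc k < length \<gamma> \<longrightarrow> \<gamma> ! Suc k \<noteq> edge_inv (\<gamma> ! k)) \<and>
     last \<gamma> \<noteq> edge_inv (hd \<gamma>)"

definition path_length :: "(nat \<Rightarrow> real) \<Rightarrow> oedge list \<Rightarrow> real" where
  "path_length l \<gamma> = (\<Sum>e\<leftarrow>\<gamma>. l (fst e))"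

definition circuit_count :: "nat \<Rightarrow> (nat \<Rightarrow> real) \<Rightarrow> real \<Rightarrow> nat" where
  "circuit_count r l t = card {\<gamma>. based_circuit r \<gamma> \<and> path_length l \<gamma> \<le> t}"

definition rose_entropy :: "nat \<Rightarrow> (nat \<Rightarrow> real) \<Rightarrow> real" where
  "rose_entropy r l = Lim at_top (\<lambda>t. ln (real (circuit_count r l t)) / t)"

definition Fbar :: "nat \<Rightarrow> (nat \<Rightarrow> real) \<Rightarrow> real" where
  "Fbar r l = (\<Sum>S\<in>Pow {1..r}. (1 - 2 * real (card S)) * exp (- (\<Sum>k\<in>S. l k)))"

end

theory Submission
  imports Defs "HOL-Real_Asymp.Real_Asymp"
begin

(* Writing x_k = exp (- l^k) and expanding the products over subsets gives
     Fbar_r l = (\<Prod>k. 1 + x_k) * (1 - \<Sum>k. 2 x_k / (1 + x_k)),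
   so Fbar_r l = 0 says that h = 1 solves \<Sum>k. 2 exp (- h l^k) / (1 + exp (- h l^k)) = 1.
   For any solution h > 0 the function e \<mapsto> 1 / (1 + exp (- h l(e))) on oriented edges is an
   eigenvector, for the eigenvalue 1, of the operator summing exp (- h l(e)) u(e) over the edges e
   that may follow a given edge without backtracking. Decomposing reduced paths by their first edge
   then bounds their number of length at most s between c exp (h s) - c' and C (1 + s) exp (h s),
   and based circuits are squeezed between such counts, so the entropy equals h. A solution exists
   by the intermediate value theorem, hence the entropy is the unique one. *)

lemma sum_Pow_prod:
  fixes x :: "'b \<Rightarrow> 'a :: comm_semiring_1"
  assumes "finite A"
  shows "(\<Sum>S\<in>Pow A. \<Prod>k\<in>S. x k) = (\<Prod>k\<in>A. x k + 1)"
  using prod_add[OF assms, of x "\<lambda>_. 1"] by simp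

lemma sum_Pow_card_mult_prod:
  fixes x :: "'b \<Rightarrow> 'a :: comm_semiring_1"
  assumes A: "finite A"
  shows "(\<Sum>S\<in>Pow A. of_nat (card S) * (\<Prod>k\<in>S. x k)) = (\<Sum>j\<in>A. x j * (\<Prod>k\<in>A - {j}. x k + 1))"
proof -
  have "(\<Sum>S\<in>Pow A. of_nat (card S) * (\<Prod>k\<in>S. x k)) = (\<Sum>S\<in>Pow A. \<Sum>j\<in>S. \<Prod>k\<in>S. x k)"
    by simp
  also have "\<dots> = (\<Sum>S\<in>Pow A. \<Sum>j\<in>{j\<in>A. j \<in> S}. \<Prod>k\<in>S. x k)"
    by (intro sum.cong) auto
  also have "\<dots> = (\<Sum>j\<in>A. \<Sum>S\<in>{S\<in>Pow A. j \<in> S}. \<Prod>k\<in>S. x k)"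
    using A by (intro sum.swap_restrict) simp_all
  also have "\<dots> = (\<Sum>j\<in>A. x j * (\<Sum>T\<in>Pow (A - {j}). \<Prod>k\<in>T. x k))"
  proof (rule sum.cong)
    fix j assume j: "j \<in> A"
    have inj: "inj_on (insert j) (Pow (A - {j}))" by (auto simp: inj_on_def)
    have "{S\<in>Pow A. j \<in> S} = insert j ` Pow (A - {j})"
    proof (intro equalityI subsetI)
      fix S assume "S \<in> {S\<in>Pow A. j \<in> S}"
      then have "S = insert j (S - {j})" "S - {j} \<in> Pow (A - {j})" by auto
      then show "S \<in> insert j ` Pow (A - {j})" by (rule image_eqI)
    qed (use j in auto)
    then have "(\<Sum>S\<in>{S\<in>Pow A. j \<in> S}. \<Prod>k\<in>S. x k) = (\<Sum>T\<in>Pow (A - {j}). \<Prod>k\<in>insert j T. x k)"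
      by (simp add: sum.reindex[OF inj])
    also have "\<dots> = (\<Sum>T\<in>Pow (A - {j}). x j * (\<Prod>k\<in>T. x k))"
      using A by (intro sum.cong refl prod.insert) (auto intro: finite_subset)
    finally show "(\<Sum>S\<in>{S\<in>Pow A. j \<in> S}. \<Prod>k\<in>S. x k) = x j * (\<Sum>T\<in>Pow (A - {j}). \<Prod>k\<in>T. x k)"
      by (simp add: sum_distrib_left)
  qed simp
  finally show ?thesis using A by (simp add: sum_Pow_prod)
qed

definition branching_sum :: "nat \<Rightarrow> (nat \<Rightarrow> real) \<Rightarrow> real \<Rightarrow> real" where
  "branching_sum r l h = (\<Sum>k\<in>{1..r}. 2 * exp (- h * l k) / (1 + exp (- h * l k)))"

lemma Fbar_eq_prod_mult:
  "Fbar r l = (\<Prod>k\<in>{1..r}. exp (- l k) + 1) * (1 - branching_sum r l 1)"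
proof -
  define x where "x k = exp (- l k)" for k
  define P where "P = (\<Prod>k\<in>{1..r}. x k + 1)"
  have x_pos: "x k + 1 > 0" for k by (simp add: x_def add_pos_pos)
  have exp_sum: "exp (- (\<Sum>k\<in>S. l k)) = (\<Prod>k\<in>S. x k)" for S
    by (cases "finite S") (simp_all add: x_def exp_sum[symmetric] sum_negf)
  have "Fbar r l = (\<Sum>S\<in>Pow {1..r}. \<Prod>k\<in>S. x k) - 2 * (\<Sum>S\<in>Pow {1..r}. real (card S) * (\<Prod>k\<in>S. x k))"
    by (simp add: Fbar_def exp_sum algebra_simps sum_subtractf sum_distrib_left)
  also have "\<dots> = P - 2 * (\<Sum>j\<in>{1..r}. x j * (\<Prod>k\<in>{1..r} - {j}. x k + 1))"
    by (simp add: P_def sum_Pow_prod sum_Pow_card_mult_prod)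
  also have "(\<Sum>j\<in>{1..r}. x j * (\<Prod>k\<in>{1..r} - {j}. x k + 1)) = (\<Sum>j\<in>{1..r}. P * (x j / (1 + x j)))"
  proof (rule sum.cong)
    fix j assume "j \<in> {1..r}"
    then have "P = (x j + 1) * (\<Prod>k\<in>{1..r} - {j}. x k + 1)" by (simp add: P_def prod.remove)
    then show "x j * (\<Prod>k\<in>{1..r} - {j}. x k + 1) = P * (x j / (1 + x j))"
      using x_pos[of j] by (simp add: field_simps)
  qed simp
  finally show ?thesis
    by (simp add: P_def x_def branching_sum_def sum_distrib_left algebra_simps)
qed

lemma Fbar_eq_0_iff: "Fbar r l = 0 \<longleftrightarrow> branching_sum r l 1 = 1"
proof -
  have "exp (- l k) + 1 \<noteq> 0" for k using exp_gt_zero[of "- l k"] by linarith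
  then show ?thesis by (simp add: Fbar_eq_prod_mult)
qed

lemma real_step_induct:
  fixes d :: real
  assumes "d > 0"
    and neg: "\<And>s. s < 0 \<Longrightarrow> P s"
    and step: "\<And>s. 0 \<le> s \<Longrightarrow> (\<And>s'. s' \<le> s - d \<Longrightarrow> P s') \<Longrightarrow> P s"
  shows "P s"
proof -
  have "\<forall>s. s < real n * d \<longrightarrow> P s" for n
  proof (induction n)
    case 0
    then show ?case using neg by simp
  next
    case (Suc n)
    show ?case
    proof (intro allI impI)
      fix s assume s: "s < real (Suc n) * d"
      show "P s"
      proof (cases "s < 0")
        case False
        show ?thesis
        proof (rule step)
          fix s' assume "s' \<le> s - d"
          then show "P s'" using Suc.IH s by (simp add: algebra_simps)
        qed (use False in simp)
      qed (rule neg)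
    qed
  qed
  moreover obtain n where "s / d < real n" using reals_Archimedean2 by blast
  ultimately show ?thesis using \<open>d > 0\<close> by (simp add: field_simps)
qed

lemma ln_div_tendsto_sandwich:
  fixes f g N :: "real \<Rightarrow> real"
  assumes bounds: "eventually (\<lambda>t. 1 \<le> f t \<and> f t \<le> N t \<and> N t \<le> g t) at_top"
    and f: "((\<lambda>t. ln (f t) / t) \<longlongrightarrow> c) at_top"
    and g: "((\<lambda>t. ln (g t) / t) \<longlongrightarrow> c) at_top"
  shows "((\<lambda>t. ln (N t) / t) \<longlongrightarrow> c) at_top"
proof (rule tendsto_sandwich[OF _ _ f g])
  have "eventually (\<lambda>t. 0 < t \<and> 1 \<le> f t \<and> f t \<le> N t \<and> N t \<le> g t) at_top"
    using eventually_gt_at_top[of 0] bounds by eventually_elim simp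
  then have "eventually (\<lambda>t. ln (f t) / t \<le> ln (N t) / t \<and> ln (N t) / t \<le> ln (g t) / t) at_top"
    by eventually_elim (auto intro!: divide_right_mono)
  then show "eventually (\<lambda>t. ln (f t) / t \<le> ln (N t) / t) at_top"
    and "eventually (\<lambda>t. ln (N t) / t \<le> ln (g t) / t) at_top"
    by (auto elim: eventually_mono)
qed

definition rose_edges :: "nat \<Rightarrow> oedge set" where
  "rose_edges r = {1..r} \<times> UNIV"

definition next_edges :: "nat \<Rightarrow> oedge \<Rightarrow> oedge set" where
  "next_edges r a = {e \<in> rose_edges r. e \<noteq> edge_inv a}"

fun reduced_after :: "oedge \<Rightarrow> oedge list \<Rightarrow> bool" where
  "reduced_after a [] = True"
| "reduced_after a (e # \<eta>) \<longleftrightarrow> e \<noteq> edge_inv a \<and> reduced_after e \<eta>"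

definition reduced_paths :: "nat \<Rightarrow> (nat \<Rightarrow> real) \<Rightarrow> oedge \<Rightarrow> real \<Rightarrow> oedge list set" where
  "reduced_paths r l a s = {\<eta>. reduced_after a \<eta> \<and> set \<eta> \<subseteq> rose_edges r \<and> path_length l \<eta> \<le> s}"

lemma path_length_simps [simp]:
  "path_length l [] = 0"
  "path_length l (e # \<eta>) = l (fst e) + path_length l \<eta>"
  "path_length l (\<eta> @ \<zeta>) = path_length l \<eta> + path_length l \<zeta>"
  by (simp_all add: path_length_def)

lemma finite_rose_edges [simp]: "finite (rose_edges r)"
  by (simp add: rose_edges_def)

lemma card_rose_edges: "card (rose_edges r) = 2 * r"
  by (simp add: rose_edges_def card_cartesian_product)

lemma sum_rose_edges:
  fixes f :: "nat \<Rightarrow> 'a :: comm_semiring_1"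
  shows "(\<Sum>e\<in>rose_edges r. f (fst e)) = 2 * (\<Sum>k\<in>{1..r}. f k)"
proof -
  have "(\<Sum>e\<in>rose_edges r. f (fst e)) = (\<Sum>k\<in>{1..r}. \<Sum>b\<in>(UNIV :: bool set). f k)"
    unfolding rose_edges_def sum.cartesian_product by (simp add: split_def)
  then show ?thesis by (simp add: UNIV_bool mult_2 sum.distrib)
qed

lemma edge_inv_in_rose_edges [simp]: "edge_inv a \<in> rose_edges r \<longleftrightarrow> a \<in> rose_edges r"
  by (simp add: rose_edges_def edge_inv_def mem_Times_iff)

lemma reduced_after_iff:
  "reduced_after a \<eta> \<longleftrightarrow> (\<forall>k. Suc k < length (a # \<eta>) \<longrightarrow> (a # \<eta>) ! Suc k \<noteq> edge_inv ((a # \<eta>) ! k))"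
proof (induction \<eta> arbitrary: a)
  case (Cons e \<eta>)
  have "(\<forall>k. Suc k < length (a # e # \<eta>) \<longrightarrow> (a # e # \<eta>) ! Suc k \<noteq> edge_inv ((a # e # \<eta>) ! k)) \<longleftrightarrow>
        e \<noteq> edge_inv a \<and> (\<forall>k. Suc k < length (e # \<eta>) \<longrightarrow> (e # \<eta>) ! Suc k \<noteq> edge_inv ((e # \<eta>) ! k))"
    (is "?L \<longleftrightarrow> ?R")
  proof
    assume L: ?L
    show ?R
      using L[rule_format, of 0] L[rule_format, of "Suc k" for k] by auto
  next
    assume R: ?R
    show ?L
    proof (intro allI impI)
      fix k assume "Suc k < length (a # e # \<eta>)"
      then show "(a # e # \<eta>) ! Suc k \<noteq> edge_inv ((a # e # \<eta>) ! k)"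
        using R by (cases k) auto
    qed
  qed
  then show ?case using Cons.IH[of e] by simp
qed simp

lemma reduced_after_snoc:
  "reduced_after a (\<eta> @ [c]) \<longleftrightarrow> reduced_after a \<eta> \<and> c \<noteq> edge_inv (last (a # \<eta>))"
  by (induction \<eta> arbitrary: a) auto

lemma based_circuit_Cons_iff:
  "based_circuit r (a # \<eta>) \<longleftrightarrow>
     set (a # \<eta>) \<subseteq> rose_edges r \<and> reduced_after a \<eta> \<and> last (a # \<eta>) \<noteq> edge_inv a"
  by (auto simp: based_circuit_def rose_edges_def mem_Times_iff reduced_after_iff)

lemma reduced_paths_Cons_decomp:
  assumes "0 \<le> s"
  shows "reduced_paths r l a s = insert [] (\<Union>e\<in>next_edges r a. Cons e ` reduced_paths r l e (s - l (fst e)))"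
proof (rule set_eqI)
  fix \<eta>
  show "\<eta> \<in> reduced_paths r l a s \<longleftrightarrow> \<eta> \<in> insert [] (\<Union>e\<in>next_edges r a. Cons e ` reduced_paths r l e (s - l (fst e)))"
    using assms by (cases \<eta>) (auto simp: reduced_paths_def next_edges_def algebra_simps image_iff)
qed

locale rose_metric =
  fixes r :: nat and l :: "nat \<Rightarrow> real"
  assumes two_le_r: "2 \<le> r"
    and lengths_pos: "\<forall>i\<in>{1..r}. l i > 0"
begin

definition min_length :: real where "min_length = Min (l ` {1..r})"

definition max_length :: real where "max_length = Max (l ` {1..r})"

lemma min_length_pos: "min_length > 0"
  using Min_in[of "l ` {1..r}"] two_le_r lengths_pos by (auto simp: min_length_def)

lemma min_length_le: "e \<in> rose_edges r \<Longrightarrow> min_length \<le> l (fst e)"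
  by (auto simp: min_length_def rose_edges_def)

lemma le_max_length: "e \<in> rose_edges r \<Longrightarrow> l (fst e) \<le> max_length"
  by (auto simp: max_length_def rose_edges_def)

lemma path_length_nonneg: "set \<eta> \<subseteq> rose_edges r \<Longrightarrow> 0 \<le> path_length l \<eta>"
  using min_length_pos min_length_le by (induction \<eta>) (auto intro!: add_nonneg_nonneg, fastforce)

lemma reduced_paths_neg: "s < 0 \<Longrightarrow> reduced_paths r l a s = {}"
  using path_length_nonneg by (fastforce simp: reduced_paths_def)

lemma finite_reduced_paths: "finite (reduced_paths r l a s)"
proof (induction s arbitrary: a rule: real_step_induct[OF min_length_pos])
  case (1 s)
  then show ?case by (simp add: reduced_paths_neg)
next
  case (2 s)
  have "s - l (fst e) \<le> s - min_length" if "e \<in> next_edges r a" for e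
    using that min_length_le by (auto simp: next_edges_def)
  then show ?case
    using 2 by (auto simp: reduced_paths_Cons_decomp next_edges_def)
qed

lemma card_reduced_paths_rec:
  assumes "0 \<le> s"
  shows "real (card (reduced_paths r l a s)) = 1 + (\<Sum>e\<in>next_edges r a. real (card (reduced_paths r l e (s - l (fst e)))))"
proof -
  let ?U = "\<Union>e\<in>next_edges r a. Cons e ` reduced_paths r l e (s - l (fst e))"
  have "card ?U = (\<Sum>e\<in>next_edges r a. card (Cons e ` reduced_paths r l e (s - l (fst e))))"
    by (rule card_UN_disjoint) (auto simp: next_edges_def finite_reduced_paths)
  moreover have "finite ?U" "[] \<notin> ?U"
    by (auto simp: next_edges_def finite_reduced_paths)
  ultimately show ?thesis
    using assms by (simp add: reduced_paths_Cons_decomp card_image flip: of_nat_sum)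
qed

lemma circuits_subset_Cons_reduced_paths:
  "{\<gamma>. based_circuit r \<gamma> \<and> path_length l \<gamma> \<le> t} \<subseteq> (\<Union>e\<in>rose_edges r. Cons e ` reduced_paths r l e t)"
proof clarify
  fix \<gamma> assume \<gamma>: "based_circuit r \<gamma>" "path_length l \<gamma> \<le> t"
  then obtain e \<eta> where e\<eta>: "\<gamma> = e # \<eta>" by (cases \<gamma>) (auto simp: based_circuit_def)
  with \<gamma> have e: "e \<in> rose_edges r" by (simp add: based_circuit_Cons_iff)
  then have "0 \<le> l (fst e)" using min_length_le min_length_pos by fastforce
  with \<gamma> e\<eta> have "\<eta> \<in> reduced_paths r l e t" by (simp add: based_circuit_Cons_iff reduced_paths_def)
  with e e\<eta> show "\<gamma> \<in> (\<Union>e\<in>rose_edges r. Cons e ` reduced_paths r l e t)" by blast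
qed

lemma finite_circuits: "finite {\<gamma>. based_circuit r \<gamma> \<and> path_length l \<gamma> \<le> t}"
  by (rule finite_subset[OF circuits_subset_Cons_reduced_paths]) (simp add: finite_reduced_paths)

lemma circuit_count_le_sum: "circuit_count r l t \<le> (\<Sum>e\<in>rose_edges r. card (reduced_paths r l e t))"
proof -
  have "circuit_count r l t \<le> card (\<Union>e\<in>rose_edges r. Cons e ` reduced_paths r l e t)"
    unfolding circuit_count_def
    by (rule card_mono[OF _ circuits_subset_Cons_reduced_paths]) (simp add: finite_reduced_paths)
  also have "\<dots> \<le> (\<Sum>e\<in>rose_edges r. card (Cons e ` reduced_paths r l e t))"
    by (rule card_UN_le) simp
  also have "\<dots> = (\<Sum>e\<in>rose_edges r. card (reduced_paths r l e t))"
    by (simp add: card_image)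
  finally show ?thesis .
qed

definition closing_edge :: "oedge list \<Rightarrow> oedge" where
  "closing_edge \<eta> = (SOME e. e \<in> rose_edges r \<and> e \<noteq> edge_inv (last ((1, True) # \<eta>)) \<and> e \<noteq> edge_inv (1, True))"

lemma closing_edge:
  "closing_edge \<eta> \<in> rose_edges r \<and> closing_edge \<eta> \<noteq> edge_inv (last ((1, True) # \<eta>)) \<and>
   closing_edge \<eta> \<noteq> edge_inv (1, True)"
  unfolding closing_edge_def
proof (rule someI_ex)
  have "{(1, True), (1, False), (2, True)} \<subseteq> rose_edges r"
    using two_le_r by (auto simp: rose_edges_def)
  moreover have "\<exists>e\<in>{(1, True), (1, False), (2, True)}. e \<noteq> edge_inv (last ((1, True) # \<eta>)) \<and> e \<noteq> edge_inv (1, True)"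
    by (auto simp: edge_inv_def)
  ultimately show "\<exists>e. e \<in> rose_edges r \<and> e \<noteq> edge_inv (last ((1, True) # \<eta>)) \<and> e \<noteq> edge_inv (1, True)"
    by blast
qed

lemma card_reduced_paths_le_circuit_count:
  "card (reduced_paths r l (1, True) t) \<le> circuit_count r l (t + 2 * max_length)"
proof -
  let ?close = "\<lambda>\<eta>. (1, True) # \<eta> @ [closing_edge \<eta>]"
  have "?close ` reduced_paths r l (1, True) t \<subseteq> {\<gamma>. based_circuit r \<gamma> \<and> path_length l \<gamma> \<le> t + 2 * max_length}"
  proof clarify
    fix \<eta> assume "\<eta> \<in> reduced_paths r l (1, True) t"
    moreover have "(1, True) \<in> rose_edges r" using two_le_r by (simp add: rose_edges_def)
    ultimately show "based_circuit r (?close \<eta>) \<and> path_length l (?close \<eta>) \<le> t + 2 * max_length"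
      using closing_edge[of \<eta>] le_max_length[of "(1, True)"] le_max_length[of "closing_edge \<eta>"]
      by (auto simp: reduced_paths_def based_circuit_Cons_iff reduced_after_snoc)
  qed
  then have "card (?close ` reduced_paths r l (1, True) t) \<le> circuit_count r l (t + 2 * max_length)"
    unfolding circuit_count_def by (rule card_mono[OF finite_circuits])
  moreover have "inj_on ?close (reduced_paths r l (1, True) t)" by (rule inj_onI) simp
  ultimately show ?thesis by (simp add: card_image)
qed

end

locale rose_weights = rose_metric +
  fixes h :: real
  assumes h_pos: "h > 0"
    and branching_sum_eq_1: "branching_sum r l h = 1"
begin

definition decay :: "nat \<Rightarrow> real" where "decay k = exp (- h * l k)"

definition perron :: "nat \<Rightarrow> real" where "perron k = 1 / (1 + decay k)"

lemma decay_pos: "decay k > 0"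
  by (simp add: decay_def)

lemma perron_pos: "perron k > 0"
  using decay_pos[of k] by (simp add: perron_def)

lemma perron_le_1: "perron k \<le> 1"
  using decay_pos[of k] by (simp add: perron_def)

lemma perron_add_decay_mult_perron: "perron k + decay k * perron k = 1"
  using decay_pos[of k] by (simp add: perron_def field_simps)

lemma half_le_perron:
  assumes "e \<in> rose_edges r"
  shows "1 / 2 \<le> perron (fst e)"
proof -
  have "0 < h * l (fst e)"
    using min_length_le[OF assms] min_length_pos h_pos by (simp add: mult_pos_pos)
  then have "decay (fst e) \<le> 1" by (simp add: decay_def)
  then show ?thesis using decay_pos[of "fst e"] by (simp add: perron_def field_simps)
qed

lemma exp_diff_eq_mult_decay: "exp (h * (s - l k)) = exp (h * s) * decay k"
  by (simp add: decay_def algebra_simps exp_diff exp_minus field_simps)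

lemma sum_next_edges_decay_mult_perron:
  assumes "a \<in> rose_edges r"
  shows "(\<Sum>e\<in>next_edges r a. decay (fst e) * perron (fst e)) = perron (fst a)"
proof -
  have "(\<Sum>e\<in>rose_edges r. decay (fst e) * perron (fst e)) = (\<Sum>k\<in>{1..r}. 2 * (decay k * perron k))"
    using sum_rose_edges[of "\<lambda>k. decay k * perron k"] by (simp add: sum_distrib_left)
  also have "\<dots> = 1"
    using branching_sum_eq_1 by (simp add: branching_sum_def decay_def perron_def)
  finally have "(\<Sum>e\<in>rose_edges r. decay (fst e) * perron (fst e)) = 1" .
  moreover have "next_edges r a = rose_edges r - {edge_inv a}" by (auto simp: next_edges_def)
  ultimately show ?thesis
    using assms perron_add_decay_mult_perron[of "fst a"] edge_inv_in_rose_edges[of a r]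
    by (simp add: sum_diff1) (simp add: edge_inv_def)
qed

lemma sum_next_edges_perron_le: "(\<Sum>e\<in>next_edges r a. perron (fst e)) \<le> 2 * real r"
proof -
  have "(\<Sum>e\<in>next_edges r a. perron (fst e)) \<le> (\<Sum>e\<in>rose_edges r. 1)"
    by (rule sum_le_included[where i = id]) (auto simp: next_edges_def perron_le_1 less_imp_le[OF perron_pos])
  then show ?thesis by (simp add: card_rose_edges)
qed

lemma card_reduced_paths_lower:
  "a \<in> rose_edges r \<Longrightarrow> perron (fst a) * (exp (h * s) - 1) / (2 * real r) \<le> card (reduced_paths r l a s)"
proof (induction s arbitrary: a rule: real_step_induct[OF min_length_pos])
  case (1 s)
  then have "exp (h * s) \<le> 1" using h_pos by (simp add: mult_pos_neg less_imp_le)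
  then have "perron (fst a) * (exp (h * s) - 1) \<le> 0"
    using perron_pos[of "fst a"] by (simp add: mult_nonneg_nonpos)
  then show ?case by (smt (verit) divide_nonpos_nonneg of_nat_0_le_iff)
next
  case (2 s)
  let ?c = "\<lambda>e. real (card (reduced_paths r l e (s - l (fst e))))"
  have r_pos: "0 < real r" using two_le_r by simp
  have "(exp (h * s) * decay (fst e) * perron (fst e) - perron (fst e)) / (2 * real r) \<le> ?c e"
    if "e \<in> next_edges r a" for e
  proof -
    have "e \<in> rose_edges r" using that by (simp add: next_edges_def)
    moreover from this have "s - l (fst e) \<le> s - min_length" using min_length_le by simp
    ultimately have "perron (fst e) * (exp (h * (s - l (fst e))) - 1) / (2 * real r) \<le> ?c e"
      using "2.IH" by blast
    then show ?thesis by (simp only: exp_diff_eq_mult_decay) (simp add: algebra_simps)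
  qed
  then have "(\<Sum>e\<in>next_edges r a. (exp (h * s) * decay (fst e) * perron (fst e) - perron (fst e)) / (2 * real r))
      \<le> (\<Sum>e\<in>next_edges r a. ?c e)"
    by (rule sum_mono)
  moreover have "(\<Sum>e\<in>next_edges r a. (exp (h * s) * decay (fst e) * perron (fst e) - perron (fst e)) / (2 * real r))
      = (exp (h * s) * perron (fst a) - (\<Sum>e\<in>next_edges r a. perron (fst e))) / (2 * real r)"
    using sum_next_edges_decay_mult_perron[OF "2.prems"]
    by (simp add: sum_divide_distrib[symmetric] sum_subtractf sum_distrib_left[symmetric] mult.assoc)
  moreover have "(\<Sum>e\<in>next_edges r a. perron (fst e)) / (2 * real r) \<le> 1"
    using sum_next_edges_perron_le[of a] r_pos by simp
  moreover have "0 \<le> perron (fst a) / (2 * real r)" using perron_pos[of "fst a"] by simp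
  ultimately show ?case
    using card_reduced_paths_rec[OF "2.hyps"] by (simp add: diff_divide_distrib algebra_simps)
qed

lemma card_reduced_paths_upper:
  "a \<in> rose_edges r \<Longrightarrow> 0 \<le> s \<Longrightarrow>
    card (reduced_paths r l a s) \<le> 2 * (1 + s / min_length) * exp (h * s) * perron (fst a)"
proof (induction s arbitrary: a rule: real_step_induct[OF min_length_pos])
  case (2 s)
  let ?c = "\<lambda>e. real (card (reduced_paths r l e (s - l (fst e))))"
  let ?d = min_length
  have "?c e \<le> 2 * (s / ?d) * exp (h * s) * (decay (fst e) * perron (fst e))"
    if "e \<in> next_edges r a" for e
  proof (cases "s - l (fst e) < 0")
    case True
    then show ?thesis
      using "2.hyps" min_length_pos decay_pos[of "fst e"] perron_pos[of "fst e"]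
      by (simp add: reduced_paths_neg less_imp_le)
  next
    case False
    have e: "e \<in> rose_edges r" using that by (simp add: next_edges_def)
    then have "s - l (fst e) \<le> s - ?d" using min_length_le by simp
    with e False have "?c e \<le> 2 * (1 + (s - l (fst e)) / ?d) * exp (h * (s - l (fst e))) * perron (fst e)"
      by (intro "2.IH") simp_all
    also have "\<dots> = 2 * (1 + (s - l (fst e)) / ?d) * exp (h * s) * (decay (fst e) * perron (fst e))"
      by (simp add: exp_diff_eq_mult_decay)
    also have "\<dots> \<le> 2 * (s / ?d) * exp (h * s) * (decay (fst e) * perron (fst e))"
    proof (intro mult_right_mono)
      show "2 * (1 + (s - l (fst e)) / ?d) \<le> 2 * (s / ?d)"
        using min_length_le[OF e] min_length_pos by (simp add: field_simps)
    qed (use decay_pos perron_pos in \<open>simp_all add: less_imp_le\<close>)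
    finally show ?thesis .
  qed
  then have "(\<Sum>e\<in>next_edges r a. ?c e) \<le> (\<Sum>e\<in>next_edges r a. 2 * (s / ?d) * exp (h * s) * (decay (fst e) * perron (fst e)))"
    by (rule sum_mono)
  also have "\<dots> = 2 * (s / ?d) * exp (h * s) * perron (fst a)"
    using sum_next_edges_decay_mult_perron[OF "2.prems"(1)] by (simp only: sum_distrib_left[symmetric])
  finally have "(\<Sum>e\<in>next_edges r a. ?c e) \<le> 2 * (s / ?d) * exp (h * s) * perron (fst a)" .
  moreover have "1 \<le> 2 * exp (h * s) * perron (fst a)"
  proof -
    have "1 \<le> exp (h * s)" using h_pos "2.hyps" by simp
    moreover have "1 \<le> 2 * perron (fst a)" using half_le_perron[OF "2.prems"(1)] by simp
    ultimately have "1 * 1 \<le> exp (h * s) * (2 * perron (fst a))" by (rule mult_mono) simp_all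
    then show ?thesis by (simp add: mult.assoc mult.left_commute)
  qed
  ultimately show ?case
    using card_reduced_paths_rec[OF "2.hyps"] by (simp add: algebra_simps)
qed simp

lemma circuit_count_upper:
  assumes "0 \<le> t"
  shows "circuit_count r l t \<le> 4 * real r * (1 + t / min_length) * exp (h * t)"
proof -
  have "real (circuit_count r l t) \<le> (\<Sum>e\<in>rose_edges r. real (card (reduced_paths r l e t)))"
    using circuit_count_le_sum by (simp flip: of_nat_sum)
  also have "\<dots> \<le> (\<Sum>e\<in>rose_edges r. 2 * (1 + t / min_length) * exp (h * t))"
  proof (rule sum_mono)
    fix e assume "e \<in> rose_edges r"
    then have "card (reduced_paths r l e t) \<le> 2 * (1 + t / min_length) * exp (h * t) * perron (fst e)"
      using assms by (rule card_reduced_paths_upper)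
    also have "\<dots> \<le> 2 * (1 + t / min_length) * exp (h * t)"
      using assms min_length_pos perron_le_1 by (intro mult_left_le) simp_all
    finally show "card (reduced_paths r l e t) \<le> 2 * (1 + t / min_length) * exp (h * t)" .
  qed
  also have "\<dots> = 4 * real r * (1 + t / min_length) * exp (h * t)"
    by (simp add: card_rose_edges)
  finally show ?thesis .
qed

lemma circuit_count_lower:
  "perron 1 * (exp (- 2 * h * max_length) * exp (h * t) - 1) / (2 * real r) \<le> circuit_count r l t"
proof -
  have "(1, True) \<in> rose_edges r" using two_le_r by (simp add: rose_edges_def)
  then have "perron 1 * (exp (h * (t - 2 * max_length)) - 1) / (2 * real r)
      \<le> card (reduced_paths r l (1, True) (t - 2 * max_length))"
    using card_reduced_paths_lower by fastforce
  also have "\<dots> \<le> circuit_count r l t"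
    using card_reduced_paths_le_circuit_count[of "t - 2 * max_length"] by simp
  finally show ?thesis by (simp add: algebra_simps flip: exp_add)
qed

lemma rose_entropy_eq: "rose_entropy r l = h"
proof -
  define B where "B = exp (- 2 * h * max_length)"
  define C where "C = perron 1 / (2 * real r)"
  let ?f = "\<lambda>t. C * (B * exp (h * t) - 1)"
  define d where "d = min_length"
  let ?g = "\<lambda>t. 4 * real r * (1 + t / d) * exp (h * t)"
  have r_pos: "0 < real r" using two_le_r by simp
  have B_pos: "0 < B" by (simp add: B_def)
  have C_pos: "0 < C" using perron_pos[of 1] r_pos by (simp add: C_def)
  have "eventually (\<lambda>t. 1 \<le> ?f t) at_top"
    using C_pos h_pos B_pos by real_asymp
  then have "eventually (\<lambda>t. 1 \<le> ?f t \<and> ?f t \<le> circuit_count r l t \<and> circuit_count r l t \<le> ?g t) at_top"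
    using eventually_ge_at_top[of 0] by eventually_elim (use circuit_count_lower circuit_count_upper in \<open>simp add: B_def C_def d_def\<close>)
  moreover have "((\<lambda>t. ln (?f t) / t) \<longlongrightarrow> h) at_top"
    using C_pos h_pos B_pos by real_asymp
  moreover have "((\<lambda>t. ln (?g t) / t) \<longlongrightarrow> h) at_top"
    using r_pos min_length_pos h_pos unfolding d_def[symmetric] by real_asymp
  ultimately have "((\<lambda>t. ln (circuit_count r l t) / t) \<longlongrightarrow> h) at_top"
    by (rule ln_div_tendsto_sandwich)
  then show ?thesis unfolding rose_entropy_def by (rule tendsto_Lim[rotated]) simp
qed

end

context rose_metric
begin

lemma exists_branching_root: "\<exists>h>0. branching_sum r l h = 1"
proof -
  define H where "H = ln (4 * real r) / min_length"
  have H_pos: "0 < H" using two_le_r min_length_pos by (simp add: H_def)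
  have "branching_sum r l H \<le> (\<Sum>k\<in>{1..r}. 2 * exp (- H * min_length))"
    unfolding branching_sum_def
  proof (rule sum_mono)
    fix k assume k: "k \<in> {1..r}"
    have "2 * exp (- H * l k) / (1 + exp (- H * l k)) \<le> 2 * exp (- H * l k)"
      by (simp add: divide_le_eq add_pos_pos)
    also have "\<dots> \<le> 2 * exp (- H * min_length)"
      using min_length_le[of "(k, True)"] k H_pos by (simp add: rose_edges_def)
    finally show "2 * exp (- H * l k) / (1 + exp (- H * l k)) \<le> 2 * exp (- H * min_length)" .
  qed
  also have "\<dots> = 1 / 2"
    using min_length_pos two_le_r by (simp add: H_def exp_minus inverse_eq_divide)
  finally have "branching_sum r l H \<le> 1" by simp
  moreover have "1 \<le> branching_sum r l 0"
    using two_le_r by (simp add: branching_sum_def)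
  moreover have "isCont (branching_sum r l) x" for x
    unfolding branching_sum_def
    by (intro continuous_intros) (auto simp: add_nonneg_eq_0_iff intro: add_pos_pos)
  ultimately obtain h where "0 \<le> h" "h \<le> H" "branching_sum r l h = 1"
    using IVT2[of "branching_sum r l" H 1 0] H_pos by auto
  moreover have "h \<noteq> 0"
    using \<open>branching_sum r l h = 1\<close> two_le_r by (auto simp: branching_sum_def)
  ultimately show ?thesis by (intro exI[of _ h]) simp
qed

lemma rose_entropy_eq_iff:
  assumes "0 < h"
  shows "rose_entropy r l = h \<longleftrightarrow> branching_sum r l h = 1"
proof
  assume "branching_sum r l h = 1"
  with assms interpret rose_weights r l h by unfold_locales
  show "rose_entropy r l = h" by (rule rose_entropy_eq)
next
  assume entropy: "rose_entropy r l = h"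
  obtain h' where "0 < h'" "branching_sum r l h' = 1"
    using exists_branching_root by blast
  then interpret rose_weights r l h' by unfold_locales
  show "branching_sum r l h = 1"
    using entropy rose_entropy_eq branching_sum_eq_1 by simp
qed

end

theorem mainTheorem12:
  fixes r :: nat and l :: "nat \<Rightarrow> real"
  assumes "r \<ge> 2"
    and "\<forall>i\<in>{1..r}. l i > 0"
  shows "rose_entropy r l = 1 \<longleftrightarrow> Fbar r l = 0"
proof -
  interpret rose_metric r l using assms by unfold_locales
  show ?thesis by (simp add: rose_entropy_eq_iff Fbar_eq_0_iff)
qed

end
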